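(* If $G$ is a graph of order $n$ with diameter $d$ and a resolving set of size $k$, then $n\leq (dk+1)^{dvc^*(G)}+1$.
   Context: A set $R$ of vertices of a graph $G$ is a resolving set if for each pair $u,v$ of distinct vertices there is $x\in R$ with $d(x,u)\neq d(x,v)$. The distance hypergraph $\mathcal{H}(G)$ has vertex set $V(G)$ and, as hyperedges, all balls $B(v,r)=\{u:d(u,v)\leq r\}$ for $v\in V(G)$ and integers $r\geq0$. For a hypergraph, a vertex set $X$ is shattered if every subset of $X$ equals $e\cap X$ for some hyperedge $e$; the VC dimension is the maximum size of a shattered set. The dual hypergraph has the hyperedges as vertices and, for each original vertex $v$, the hyperedge consisting of the original hyperedges containing $v$. The dual distance-VC dimension $dvc^*(G)$ is the VC dimension of the dual of $\mathcal{H}(G)$. *)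

theory Defs
  imports Main
begin

definition simple_graph :: "'a set \<Rightarrow> ('a \<Rightarrow> 'a \<Rightarrow> bool) \<Rightarrow> bool" where
  "simple_graph V E \<longleftrightarrow> finite V \<and> (\<forall>u v. E u v \<longrightarrow> u \<in> V \<and> v \<in> V)
     \<and> (\<forall>u v. E u v \<longrightarrow> E v u) \<and> (\<forall>v. \<not> E v v)"

definition walk_len :: "'a set \<Rightarrow> ('a \<Rightarrow> 'a \<Rightarrow> bool) \<Rightarrow> 'a \<Rightarrow> 'a \<Rightarrow> nat \<Rightarrow> bool" where
  "walk_len V E u v n \<longleftrightarrow> (\<exists>p. length p = Suc n \<and> hd p = u \<and> last p = v \<and> set p \<subseteq> V
      \<and> (\<forall>i < n. E (p ! i) (p ! Suc i)))"

definition connected_graph :: "'a set \<Rightarrow> ('a \<Rightarrow> 'a \<Rightarrow> bool) \<Rightarrow> bool" where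
  "connected_graph V E \<longleftrightarrow> (\<forall>u\<in>V. \<forall>v\<in>V. \<exists>n. walk_len V E u v n)"

definition gdist :: "'a set \<Rightarrow> ('a \<Rightarrow> 'a \<Rightarrow> bool) \<Rightarrow> 'a \<Rightarrow> 'a \<Rightarrow> nat" where
  "gdist V E u v = (LEAST n. walk_len V E u v n)"

definition diameter :: "'a set \<Rightarrow> ('a \<Rightarrow> 'a \<Rightarrow> bool) \<Rightarrow> nat" where
  "diameter V E = Max {gdist V E u v | u v. u \<in> V \<and> v \<in> V}"

definition resolving_set :: "'a set \<Rightarrow> ('a \<Rightarrow> 'a \<Rightarrow> bool) \<Rightarrow> 'a set \<Rightarrow> bool" where
  "resolving_set V E R \<longleftrightarrow> R \<subseteq> V \<and>
     (\<forall>u\<in>V. \<forall>v\<in>V. u \<noteq> v \<longrightarrow> (\<exists>x\<in>R. gdist V E x u \<noteq> gdist V E x v))"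

definition ball :: "'a set \<Rightarrow> ('a \<Rightarrow> 'a \<Rightarrow> bool) \<Rightarrow> 'a \<Rightarrow> nat \<Rightarrow> 'a set" where
  "ball V E v r = {u \<in> V. gdist V E u v \<le> r}"

text \<open>Hyperedges of the distance hypergraph H(G) (a hypergraph as a set of hyperedges).\<close>
definition distance_hyperedges :: "'a set \<Rightarrow> ('a \<Rightarrow> 'a \<Rightarrow> bool) \<Rightarrow> 'a set set" where
  "distance_hyperedges V E = {ball V E v r | v r. v \<in> V}"

definition shattered :: "'b set set \<Rightarrow> 'b set \<Rightarrow> bool" where
  "shattered F X \<longleftrightarrow> (\<forall>Y \<subseteq> X. \<exists>e\<in>F. e \<inter> X = Y)"

definition vc_dim :: "'b set \<Rightarrow> 'b set set \<Rightarrow> nat" where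
  "vc_dim W F = Max {card X | X. X \<subseteq> W \<and> shattered F X}"

text \<open>Dual hypergraph: vertices are the hyperedges, and each original vertex v gives
  the hyperedge of all original hyperedges containing v.\<close>
definition dual_hyperedges :: "'a set \<Rightarrow> 'a set set \<Rightarrow> 'a set set set" where
  "dual_hyperedges W F = {{e \<in> F. v \<in> e} | v. v \<in> W}"

definition dvc_star :: "'a set \<Rightarrow> ('a \<Rightarrow> 'a \<Rightarrow> bool) \<Rightarrow> nat" where
  "dvc_star V E = vc_dim (distance_hyperedges V E) (dual_hyperedges V (distance_hyperedges V E))"

end

theory Submission
  imports Defs
begin

text \<open>The balls of radius less than \<open>d\<close> around the \<open>k\<close> vertices of a resolving set form a
  family \<open>S\<close> of at most \<open>d k\<close> hyperedges that separates the vertices: \<open>d(x,u) < d(x,v)\<close> means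
  \<open>u\<close> lies in the ball of radius \<open>d(x,u)\<close> around \<open>x\<close> and \<open>v\<close> does not. Hence \<open>v \<mapsto> {e \<in> S. v \<in> e}\<close>
  embeds the vertices into the trace of the dual hypergraph on \<open>S\<close>, whose shattered sets
  are shattered by the dual itself. A Sauer-type bound \<open>(|S| + 1)^D\<close> on the size of a set
  family on \<open>S\<close> without shattered sets of size larger than \<open>D\<close> finishes the proof.\<close>

lemma shattered_image_remove:
  assumes "x \<notin> Y" and "shattered ((\<lambda>t. t - {x}) ` T) Y"
  shows "shattered T Y"
  unfolding shattered_def
proof (intro allI impI)
  fix Z assume "Z \<subseteq> Y"
  then obtain t where "t \<in> T" "(t - {x}) \<inter> Y = Z"
    using assms(2) unfolding shattered_def by blast
  then show "\<exists>e\<in>T. e \<inter> Y = Z" using assms(1) by blast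
qed

lemma shattered_insert_if_shattered_pairs:
  assumes "x \<notin> Y" and "shattered {t \<in> T. x \<notin> t \<and> insert x t \<in> T} Y"
  shows "shattered T (insert x Y)"
  unfolding shattered_def
proof (intro allI impI)
  fix Z assume Z: "Z \<subseteq> insert x Y"
  then have "Z - {x} \<subseteq> Y" by blast
  then obtain s where s: "s \<in> T" "x \<notin> s" "insert x s \<in> T" "s \<inter> Y = Z - {x}"
    using assms(2) unfolding shattered_def by blast
  show "\<exists>e\<in>T. e \<inter> insert x Y = Z"
  proof (cases "x \<in> Z")
    case True
    then have "insert x s \<inter> insert x Y = Z" using s(4) Z assms(1) by auto
    then show ?thesis using s(3) by blast
  next
    case False
    then have "s \<inter> insert x Y = Z" using s(2,4) Z assms(1) by auto
    then show ?thesis using s(1) by blast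
  qed
qed

text \<open>Removing \<open>x\<close> from every member is at most two-to-one, and the collisions are exactly the
  pairs \<open>t, insert x t\<close>.\<close>

lemma card_le_card_image_remove_plus_pairs:
  assumes "finite T"
  shows "card T \<le> card ((\<lambda>t. t - {x}) ` T) + card {t \<in> T. x \<notin> t \<and> insert x t \<in> T}"
proof -
  define A where "A = {t \<in> T. x \<notin> t}"
  define B where "B = {t \<in> T. x \<in> t}"
  have finA: "finite A" and finB: "finite B" using assms unfolding A_def B_def by auto
  have "inj_on (\<lambda>t. t - {x}) B" unfolding B_def inj_on_def by blast
  then have cardB: "card ((\<lambda>t. t - {x}) ` B) = card B" by (rule card_image)
  have T_split: "T = A \<union> B" unfolding A_def B_def by blast
  moreover have "(\<lambda>t. t - {x}) ` A = A" unfolding A_def by force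
  ultimately have image: "(\<lambda>t. t - {x}) ` T = A \<union> (\<lambda>t. t - {x}) ` B" by (simp add: image_Un)
  have pairs: "{t \<in> T. x \<notin> t \<and> insert x t \<in> T} = A \<inter> (\<lambda>t. t - {x}) ` B"
  proof (intro equalityI subsetI)
    fix s assume "s \<in> {t \<in> T. x \<notin> t \<and> insert x t \<in> T}"
    then have "s \<in> A" "insert x s \<in> B" "s = insert x s - {x}" unfolding A_def B_def by auto
    then show "s \<in> A \<inter> (\<lambda>t. t - {x}) ` B" by blast
  next
    fix s assume "s \<in> A \<inter> (\<lambda>t. t - {x}) ` B"
    then obtain b where "s \<in> A" "b \<in> B" "s = b - {x}" by blast
    moreover then have "insert x s = b" unfolding B_def by auto
    ultimately show "s \<in> {t \<in> T. x \<notin> t \<and> insert x t \<in> T}" unfolding A_def B_def by auto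
  qed
  have "card T \<le> card A + card B" unfolding T_split by (rule card_Un_le)
  also have "\<dots> = card (A \<union> (\<lambda>t. t - {x}) ` B) + card (A \<inter> (\<lambda>t. t - {x}) ` B)"
    using card_Un_Int[OF finA finite_imageI[OF finB, of "\<lambda>t. t - {x}"]] cardB by simp
  finally show ?thesis unfolding image pairs .
qed

lemma card_le_power_if_shattered_card_le:
  assumes "finite X" and "T \<subseteq> Pow X"
    and "\<And>Y. Y \<subseteq> X \<Longrightarrow> shattered T Y \<Longrightarrow> card Y \<le> D"
  shows "card T \<le> (card X + 1) ^ D"
  using assms
proof (induction X arbitrary: T D rule: finite_induct)
  case empty
  then have "T \<subseteq> {{}}" by auto
  then have "card T \<le> 1" using card_mono[of "{{}}" T] by simp
  then show ?case by simp
next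
  case (insert x X)
  define T0 where "T0 = (\<lambda>t. t - {x}) ` T"
  define T1 where "T1 = {t \<in> T. x \<notin> t \<and> insert x t \<in> T}"
  have finT: "finite T"
    using insert.prems(1) insert.hyps(1) by (meson finite_Pow_iff finite_insert finite_subset)
  have split: "card T \<le> card T0 + card T1"
    unfolding T0_def T1_def by (rule card_le_card_image_remove_plus_pairs[OF finT])
  have xY: "x \<notin> Y" if "Y \<subseteq> X" for Y using that insert.hyps(2) by blast
  have T0_bound: "card T0 \<le> (card X + 1) ^ D"
  proof (rule insert.IH)
    show "T0 \<subseteq> Pow X" using insert.prems(1) unfolding T0_def by auto
    show "card Y \<le> D" if "Y \<subseteq> X" "shattered T0 Y" for Y
      using insert.prems(2) that shattered_image_remove[OF xY] unfolding T0_def by blast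
  qed
  have T1_shattered: "card Y + 1 \<le> D" if "Y \<subseteq> X" "shattered T1 Y" for Y
  proof -
    have "card (insert x Y) \<le> D"
      using insert.prems(2) that shattered_insert_if_shattered_pairs[OF xY] unfolding T1_def
      by blast
    then show ?thesis
      using that(1) xY[OF that(1)] insert.hyps(1) by (simp add: finite_subset)
  qed
  have T1_Pow: "T1 \<subseteq> Pow X" using insert.prems(1) unfolding T1_def by auto
  show ?case
  proof (cases D)
    case 0
    have "T1 = {}"
      using T1_shattered[of "{}"] 0 unfolding shattered_def by fastforce
    then show ?thesis using split T0_bound 0 by simp
  next
    case (Suc D')
    have "card T1 \<le> (card X + 1) ^ D'"
      using insert.IH[OF T1_Pow] T1_shattered Suc by fastforce
    then have "card T \<le> (card X + 1) ^ D + (card X + 1) ^ D'"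
      using split T0_bound by linarith
    also have "\<dots> = (card X + 2) * (card X + 1) ^ D'" using Suc by simp
    also have "\<dots> \<le> (card X + 2) * (card X + 2) ^ D'"
      by (intro mult_left_mono power_mono) auto
    also have "\<dots> = (card (insert x X) + 1) ^ D" using Suc insert.hyps by simp
    finally show ?thesis .
  qed
qed

lemma card_le_vc_dim:
  assumes "finite W" and "X \<subseteq> W" and "shattered F X"
  shows "card X \<le> vc_dim W F"
proof -
  have "{card X | X. X \<subseteq> W \<and> shattered F X} \<subseteq> card ` Pow W" by auto
  then have "finite {card X | X. X \<subseteq> W \<and> shattered F X}"
    using assms(1) by (meson finite_Pow_iff finite_imageI finite_subset)
  then show ?thesis unfolding vc_dim_def using assms(2,3) by (auto intro: Max_ge)
qed

lemma card_le_power_dual_vc_dim: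
  assumes "finite W" and "S \<subseteq> W" and "inj_on (\<lambda>v. {e \<in> S. v \<in> e}) V"
  shows "card V \<le> (card S + 1) ^ vc_dim W (dual_hyperedges V W)"
proof -
  define T where "T = (\<lambda>v. {e \<in> S. v \<in> e}) ` V"
  have "card V = card T" unfolding T_def using assms(3) by (simp add: card_image)
  also have "card T \<le> (card S + 1) ^ vc_dim W (dual_hyperedges V W)"
  proof (rule card_le_power_if_shattered_card_le)
    show "finite S" using assms(1,2) by (rule finite_subset[rotated])
    show "T \<subseteq> Pow S" unfolding T_def by blast
    fix Y assume Y: "Y \<subseteq> S" "shattered T Y"
    have "shattered (dual_hyperedges V W) Y"
      unfolding shattered_def
    proof (intro allI impI)
      fix Z assume "Z \<subseteq> Y"
      then obtain v where "v \<in> V" "{e \<in> S. v \<in> e} \<inter> Y = Z"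
        using Y(2) unfolding shattered_def T_def by blast
      then have "{e \<in> W. v \<in> e} \<in> dual_hyperedges V W" "{e \<in> W. v \<in> e} \<inter> Y = Z"
        unfolding dual_hyperedges_def using Y(1) assms(2) by auto
      then show "\<exists>e\<in>dual_hyperedges V W. e \<inter> Y = Z" by blast
    qed
    then show "card Y \<le> vc_dim W (dual_hyperedges V W)"
      using card_le_vc_dim assms(1,2) Y(1) by blast
  qed
  finally show ?thesis .
qed

lemma walk_len_rev:
  assumes sym: "\<And>a b. E a b \<Longrightarrow> E b a" and "walk_len V E u v n"
  shows "walk_len V E v u n"
proof -
  obtain p where p: "length p = Suc n" "hd p = u" "last p = v" "set p \<subseteq> V"
    "\<forall>i < n. E (p ! i) (p ! Suc i)" using assms(2) unfolding walk_len_def by blast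
  have "E (rev p ! i) (rev p ! Suc i)" if "i < n" for i
  proof -
    have "E (p ! (n - Suc i)) (p ! Suc (n - Suc i))" using p(5) that by simp
    moreover have "Suc (n - Suc i) = n - i" using that by simp
    ultimately show ?thesis using sym p(1) that by (simp add: rev_nth)
  qed
  moreover have "p \<noteq> []" using p(1) by auto
  ultimately show ?thesis
    unfolding walk_len_def using p by (auto simp: hd_rev last_rev intro!: exI[of _ "rev p"])
qed

lemma gdist_commute:
  assumes "simple_graph V E"
  shows "gdist V E u v = gdist V E v u"
proof -
  have "\<And>a b. E a b \<Longrightarrow> E b a" using assms unfolding simple_graph_def by blast
  then have "walk_len V E u v = walk_len V E v u"
    using walk_len_rev[of E V] by (intro ext iffI) blast+
  then show ?thesis unfolding gdist_def by simp
qed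

lemma gdist_le_diameter:
  assumes "finite V" and "u \<in> V" and "v \<in> V"
  shows "gdist V E u v \<le> diameter V E"
proof -
  have "{gdist V E u v | u v. u \<in> V \<and> v \<in> V} = (\<lambda>(u, v). gdist V E u v) ` (V \<times> V)" by auto
  then have "finite {gdist V E u v | u v. u \<in> V \<and> v \<in> V}" using assms(1) by simp
  moreover have "gdist V E u v \<in> {gdist V E u v | u v. u \<in> V \<and> v \<in> V}" using assms(2,3) by blast
  ultimately show ?thesis unfolding diameter_def by (rule Max_ge)
qed

lemma resolving_set_balls_separate:
  assumes "simple_graph V E" and "resolving_set V E R"
    and "u \<in> V" and "v \<in> V" and "u \<noteq> v"
  shows "\<exists>x\<in>R. \<exists>r<diameter V E. (u \<in> ball V E x r) \<noteq> (v \<in> ball V E x r)"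
proof -
  have finV: "finite V" using assms(1) unfolding simple_graph_def by blast
  have separated: "\<exists>r<diameter V E. (a \<in> ball V E x r) \<noteq> (b \<in> ball V E x r)"
    if "x \<in> R" "a \<in> V" "b \<in> V" "gdist V E x a < gdist V E x b" for x a b
  proof (intro exI conjI)
    have "x \<in> V" using that(1) assms(2) unfolding resolving_set_def by blast
    then show "gdist V E x a < diameter V E"
      using that(3,4) gdist_le_diameter[OF finV] by (meson order_less_le_trans)
    show "(a \<in> ball V E x (gdist V E x a)) \<noteq> (b \<in> ball V E x (gdist V E x a))"
      unfolding ball_def using that(2-4) gdist_commute[OF assms(1), of x] by simp
  qed
  obtain x where "x \<in> R" "gdist V E x u \<noteq> gdist V E x v"
    using assms(2-5) unfolding resolving_set_def by blast
  then show ?thesis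
    using separated[of x u v] separated[of x v u] assms(3,4) by (metis linorder_neq_iff)
qed

theorem proposition4:
  fixes V :: "'a set" and E :: "'a \<Rightarrow> 'a \<Rightarrow> bool" and R :: "'a set" and n d k :: nat
  assumes "simple_graph V E" and "V \<noteq> {}" and "connected_graph V E"
    and "card V = n" and "diameter V E = d"
    and "resolving_set V E R" and "card R = k"
  shows "n \<le> (d * k + 1) ^ dvc_star V E + 1"
proof -
  define W where "W = distance_hyperedges V E"
  define S where "S = (\<lambda>(x, r). ball V E x r) ` (R \<times> {..<d})"
  have finV: "finite V" using assms(1) unfolding simple_graph_def by blast
  have RV: "R \<subseteq> V" using assms(6) unfolding resolving_set_def by blast
  have "W \<subseteq> Pow V" unfolding W_def distance_hyperedges_def ball_def by auto
  then have finW: "finite W" using finV by (meson finite_Pow_iff finite_subset)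
  have SW: "S \<subseteq> W" unfolding S_def W_def distance_hyperedges_def using RV by auto
  have "finite R" using finV RV by (rule finite_subset[rotated])
  then have "card S \<le> card (R \<times> {..<d})" unfolding S_def by (intro card_image_le) simp
  then have card_S: "card S \<le> d * k" using assms(7) by (simp add: card_cartesian_product mult.commute)
  have "inj_on (\<lambda>v. {e \<in> S. v \<in> e}) V"
  proof (rule inj_onI, rule ccontr)
    fix u v assume uv: "u \<in> V" "v \<in> V" "{e \<in> S. u \<in> e} = {e \<in> S. v \<in> e}" "u \<noteq> v"
    then obtain x r where "x \<in> R" "r < d" "(u \<in> ball V E x r) \<noteq> (v \<in> ball V E x r)"
      using resolving_set_balls_separate[OF assms(1,6)] assms(5) by blast
    moreover from this have "ball V E x r \<in> S" unfolding S_def by force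
    ultimately show False using uv(3) by blast
  qed
  then have "n \<le> (card S + 1) ^ dvc_star V E"
    using card_le_power_dual_vc_dim[OF finW SW] assms(4) unfolding dvc_star_def W_def by blast
  also have "\<dots> \<le> (d * k + 1) ^ dvc_star V E" using card_S by (intro power_mono) auto
  finally show ?thesis by simp
qed

end
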